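(* Let $K$ be a finite field of characteristic $p$ and order $q$, let $s$ be a positive integer with $\gcd(s,q-1)=1$, let $k$ be a positive integer and $t=(t_1,\dots,t_k)\in(K^\times)^k$. Then in the group algebra $L[K^\times]$, $$W^{[t]}=W\,V^{[t]},$$ where $W=\sum_{u\in K^\times}W_u[u]$, $W^{[t]}=\sum_{u\in K^\times}W_{t_1u}\cdots W_{t_ku}[u]$ and $V^{[t]}=\sum_{u\in K^\times}(Q^t_{1,u}-Q^t_{1,0})[u]$.
   Context: $\zeta=\exp(2\pi i/p)$, $\psi(x)=\zeta^{\mathrm{Tr}(x)}$ with $\mathrm{Tr}$ the absolute trace of $K$ to $\mathbb{F}_p$; $W_u=\sum_{x\in K}\psi(x^s-ux)$. $L=\mathbb{Q}(\zeta,\xi)$ with $\xi=\exp(2\pi i/(q-1))$, and $L[K^\times]$ is the group algebra of $K^\times$ over $L$, elements written $\sum_u S_u[u]$. Let $1/s$ denote the inverse of $s$ modulo $q-1$. For $a,b\in K$, $Q^t_{a,b}$ is the number of $v=(v_1,\dots,v_k)\in K^k$ with $t_1v_1+\cdots+t_kv_k=a$ and $(v_1^s+\cdots+v_k^s)^{1/s}=b$. *)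

theory Defs
  imports "HOL-Analysis.Analysis" "HOL-Number_Theory.Cong"
begin

(* K is modelled as a finite field type 'a :: {field, finite};
   p = CHAR('a), q = CARD('a), q = p ^ ff_deg. *)

definition ff_deg :: "'a::{field,finite} itself \<Rightarrow> nat" where
  "ff_deg _ = (LEAST n. CHAR('a) ^ n = CARD('a))"

(* absolute trace K -> F_p (values in the prime subfield of K) *)
definition abs_trace :: "'a::{field,finite} \<Rightarrow> 'a" where
  "abs_trace x = (\<Sum>j<ff_deg TYPE('a). x ^ (CHAR('a) ^ j))"

(* representative in {0..p-1} of the trace, viewed as an element of F_p *)
definition trace_nat :: "'a::{field,finite} \<Rightarrow> nat" where
  "trace_nat x = (LEAST m. of_nat m = abs_trace x)"

definition psi :: "'a::{field,finite} \<Rightarrow> complex" where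
  "psi x = exp (2 * pi * \<i> * of_nat (trace_nat x) / of_nat CHAR('a))"

definition W :: "nat \<Rightarrow> 'a::{field,finite} \<Rightarrow> complex" where
  "W s u = (\<Sum>x\<in>UNIV. psi (x ^ s - u * x))"

(* 1/s: an inverse of s modulo q-1, taken positive *)
definition inv_exp :: "'a::{field,finite} itself \<Rightarrow> nat \<Rightarrow> nat" where
  "inv_exp _ s = (SOME s'. s' > 0 \<and> [s * s' = 1] (mod (CARD('a) - 1)))"

(* Q^t_{a,b} : vectors v in K^k (functions on {..<k}) *)
definition Q :: "nat \<Rightarrow> nat \<Rightarrow> (nat \<Rightarrow> 'a::{field,finite}) \<Rightarrow> 'a \<Rightarrow> 'a \<Rightarrow> nat" where
  "Q s k t a b = card {v \<in> PiE {..<k} (\<lambda>_. UNIV).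
      (\<Sum>i<k. t i * v i) = a \<and> (\<Sum>i<k. v i ^ s) ^ inv_exp TYPE('a) s = b}"

(* multiplication in the group algebra C[K^x]; elements are coefficient
   functions K -> complex, only values at nonzero u matter *)
definition ga_mult :: "('a::field \<Rightarrow> complex) \<Rightarrow> ('a \<Rightarrow> complex) \<Rightarrow> 'a \<Rightarrow> complex" where
  "ga_mult S T u = (\<Sum>a\<in>{x. x \<noteq> 0}. \<Sum>b\<in>{x. x \<noteq> 0}. if a * b = u then S a * T b else 0)"

definition Wcoef :: "nat \<Rightarrow> 'a::{field,finite} \<Rightarrow> complex" where
  "Wcoef s u = W s u"

definition Wt_coef :: "nat \<Rightarrow> nat \<Rightarrow> (nat \<Rightarrow> 'a::{field,finite}) \<Rightarrow> 'a \<Rightarrow> complex" where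
  "Wt_coef s k t u = (\<Prod>i<k. W s (t i * u))"

definition Vt_coef :: "nat \<Rightarrow> nat \<Rightarrow> (nat \<Rightarrow> 'a::{field,finite}) \<Rightarrow> 'a \<Rightarrow> complex" where
  "Vt_coef s k t u = of_int (int (Q s k t 1 u) - int (Q s k t 1 0))"

end

theory Submission
  imports Defs "HOL-Computational_Algebra.Polynomial"
begin

(* Expanding the product, W^[t]_u is the sum of psi(B v - u A v) over v in K^k, where
   A v = t_1 v_1 + ... + t_k v_k and B v = v_1^s + ... + v_k^s.  Since x \<mapsto> x^s permutes K,
   the sum of psi(B v) vanishes and may be subtracted; then the vectors with A v = 0 contribute
   nothing, and every other vector is uniquely y w with y \<noteq> 0 and A w = 1.  For such w, with
   r = (B w)^(1/s), the sum over y is W_(u/r) if r \<noteq> 0, and -q = -(sum of the W_a, a \<noteq> 0)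
   if r = 0.  Grouping the w by r gives the coefficients of W V^[t].

   That psi is a nontrivial additive character rests on the absolute trace being additive,
   fixed by Frobenius (so with values in the prime field) and not identically zero; all three
   use that q is a power of p. *)

section \<open>Finite fields\<close>

lemma prime_CHAR_finite_field: "prime CHAR('a::{field,finite})"
  by (rule prime_CHAR_semidom) (simp add: finite_imp_CHAR_pos)

lemma CARD_finite_field_ge_2: "CARD('a::{field,finite}) \<ge> 2"
proof -
  have "card {0::'a, 1} \<le> CARD('a)"
    by (rule card_mono) auto
  thus ?thesis by simp
qed

lemma of_nat_power_CHAR: "(of_nat m :: 'a::{field,finite}) ^ CHAR('a) = of_nat m"
proof (induction m)
  case 0
  show ?case using prime_gt_0_nat[OF prime_CHAR_finite_field[where 'a='a]] by simp
next
  case (Suc m)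
  then show ?case
    by (simp add: freshmans_dream prime_CHAR_finite_field)
qed

lemma of_nat_inverse_exists:
  assumes "(of_nat m :: 'a::{field,finite}) \<noteq> 0"
  obtains m' where "of_nat m' * (of_nat m :: 'a) = 1"
proof -
  have "coprime CHAR('a) m"
    using assms prime_CHAR_finite_field[where 'a='a]
    by (simp add: of_nat_eq_0_iff_char_dvd prime_imp_coprime)
  then obtain m' where "[m * m' = 1] (mod CHAR('a))"
    using cong_solve_coprime_nat by (auto simp: coprime_commute)
  hence "of_nat (m * m') = (of_nat 1 :: 'a)"
    by (simp only: of_nat_eq_iff_cong_CHAR)
  thus ?thesis
    by (intro that[of m']) (simp add: mult.commute)
qed

definition add_closed :: "'a::monoid_add set \<Rightarrow> bool" where
  "add_closed H \<longleftrightarrow> 0 \<in> H \<and> (\<forall>a\<in>H. \<forall>b\<in>H. a + b \<in> H)"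

lemma add_closed_of_nat_mult:
  fixes H :: "'a::semiring_1 set"
  assumes "add_closed H" "h \<in> H"
  shows "of_nat m * h \<in> H"
  using assms by (induction m) (auto simp: add_closed_def distrib_right)

lemma add_closed_uminus:
  fixes H :: "'a::{field,finite} set"
  assumes "add_closed H" "h \<in> H"
  shows "- h \<in> H"
proof -
  have "CHAR('a) \<ge> 1"
    using prime_ge_1_nat[OF prime_CHAR_finite_field[where 'a='a]] .
  hence "(of_nat (CHAR('a) - 1) :: 'a) = - 1"
    by (simp add: of_nat_diff)
  thus ?thesis
    using add_closed_of_nat_mult[OF assms, of "CHAR('a) - 1"] by simp
qed

lemma add_closed_adjoin:
  fixes H :: "'a::{field,finite} set"
  assumes H: "add_closed H"
  shows "add_closed ((\<lambda>(h, j). h + of_nat j * x) ` (H \<times> {..<CHAR('a)}))" (is "add_closed ?H'")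
  unfolding add_closed_def
proof (intro conjI ballI)
  let ?p = "CHAR('a)"
  have p: "?p > 0"
    using prime_gt_0_nat[OF prime_CHAR_finite_field[where 'a='a]] .
  show "0 \<in> ?H'"
    using H p unfolding add_closed_def by (force intro: image_eqI[of _ _ "(0, 0)"])
  fix a b
  assume "a \<in> ?H'" "b \<in> ?H'"
  then obtain h1 j1 h2 j2 where h: "h1 \<in> H" "h2 \<in> H"
    and ab: "a = h1 + of_nat j1 * x" "b = h2 + of_nat j2 * x"
    by auto
  have "a + b = (h1 + h2) + of_nat (j1 + j2) * x"
    using ab by (simp add: algebra_simps)
  also have "(of_nat (j1 + j2) :: 'a) = of_nat ((j1 + j2) mod ?p)"
    unfolding of_nat_eq_iff_cong_CHAR by (simp add: cong_def)
  finally have "a + b = (h1 + h2) + of_nat ((j1 + j2) mod ?p) * x" .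
  moreover have "h1 + h2 \<in> H"
    using H h unfolding add_closed_def by blast
  ultimately show "a + b \<in> ?H'"
    using p by force
qed

lemma add_closed_adjoin_collision:
  fixes H :: "'a::{field,finite} set"
  assumes H: "add_closed H" and h: "h1 \<in> H" "h2 \<in> H" and j: "j2 < j1" "j1 < CHAR('a)"
    and eq: "h1 + of_nat j1 * x = h2 + of_nat j2 * x"
  shows "x \<in> H"
proof -
  have "\<not> CHAR('a) dvd (j1 - j2)"
    using j by (auto dest!: dvd_imp_le)
  hence "(of_nat (j1 - j2) :: 'a) \<noteq> 0"
    by (simp add: of_nat_eq_0_iff_char_dvd)
  then obtain m where m: "of_nat m * (of_nat (j1 - j2) :: 'a) = 1"
    by (rule of_nat_inverse_exists)
  have "h1 + of_nat (j1 - j2) * x = h2"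
    using eq j by (simp add: of_nat_diff algebra_simps)
  hence "of_nat m * h1 + (of_nat m * of_nat (j1 - j2)) * x = of_nat m * h2"
    by (metis distrib_left mult.assoc)
  hence "x = of_nat m * h2 + - (of_nat m * h1)"
    using m by (simp add: algebra_simps)
  moreover have "of_nat m * h2 \<in> H" "- (of_nat m * h1) \<in> H"
    using h add_closed_of_nat_mult add_closed_uminus H by blast+
  ultimately show ?thesis
    using H unfolding add_closed_def by metis
qed

lemma inj_on_add_closed_adjoin:
  fixes H :: "'a::{field,finite} set"
  assumes "add_closed H" "x \<notin> H"
  shows "inj_on (\<lambda>(h, j). h + of_nat j * x) (H \<times> {..<CHAR('a)})"
proof (rule inj_onI, clarify)
  fix h1 j1 h2 j2
  assume h: "h1 \<in> H" "h2 \<in> H" "j1 < CHAR('a)" "j2 < CHAR('a)"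
    and eq: "h1 + of_nat j1 * x = h2 + of_nat j2 * x"
  have "j1 = j2"
    using add_closed_adjoin_collision[OF assms(1) h(1,2) _ h(3) eq]
      add_closed_adjoin_collision[OF assms(1) h(2,1) _ h(4) eq[symmetric]] assms(2)
    by (metis linorder_neqE_nat)
  thus "h1 = h2 \<and> j1 = j2"
    using eq by simp
qed

text \<open>Adjoining elements one at a time to \<open>{0}\<close> gives additively closed sets whose sizes are
  successive powers of \<open>p\<close>, until the whole field is reached.\<close>

lemma CARD_eq_CHAR_power: "\<exists>n. CARD('a::{field,finite}) = CHAR('a) ^ n"
proof -
  let ?p = "CHAR('a)"
  have "\<exists>n. CARD('a) = ?p ^ n" if "add_closed (H :: 'a set)" "card H = ?p ^ m" for H m
    using that
  proof (induction "CARD('a) - card H" arbitrary: H m rule: less_induct)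
    case less
    show ?case
    proof (cases "H = UNIV")
      case True
      thus ?thesis using less.prems by auto
    next
      case False
      then obtain x where x: "x \<notin> H" by auto
      define H' where "H' = (\<lambda>(h, j). h + of_nat j * x) ` (H \<times> {..<?p})"
      have H': "add_closed H'" "card H' = ?p ^ Suc m"
        using add_closed_adjoin[OF less.prems(1)] inj_on_add_closed_adjoin[OF less.prems(1) x]
          less.prems(2)
        by (simp_all add: H'_def card_image card_cartesian_product)
      have "card H < card H'"
        using H'(2) less.prems(2) prime_ge_2_nat[OF prime_CHAR_finite_field[where 'a='a]]
        by simp
      moreover have "card H' \<le> CARD('a)"
        by (rule card_mono) auto
      ultimately show ?thesis
        by (intro less.hyps[OF _ H']) simp
    qed
  qed
  from this[of "{0}" 0] show ?thesis
    by (simp add: add_closed_def)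
qed

lemma CHAR_power_ff_deg: "CHAR('a::{field,finite}) ^ ff_deg TYPE('a) = CARD('a)"
  unfolding ff_deg_def using CARD_eq_CHAR_power[where 'a='a] by (metis (mono_tags) LeastI)

lemma ff_deg_pos: "ff_deg TYPE('a::{field,finite}) > 0"
  using CHAR_power_ff_deg[where 'a='a] CARD_finite_field_ge_2[where 'a='a]
  by (cases "ff_deg TYPE('a)") auto

lemma power_CARD_minus_1:
  assumes "(x::'a::{field,finite}) \<noteq> 0"
  shows "x ^ (CARD('a) - 1) = 1"
proof -
  let ?N = "UNIV - {0::'a}"
  have "x ^ card ?N * \<Prod>?N = (\<Prod>y\<in>?N. x * y)"
    by (simp add: prod.distrib)
  also have "\<dots> = \<Prod>?N"
    by (rule prod.reindex_bij_witness[of _ "\<lambda>y. y / x" "\<lambda>y. x * y"]) (use assms in auto)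
  finally have "x ^ card ?N = 1"
    by simp
  moreover have "card ?N = CARD('a) - 1"
    by (simp add: card_Diff_singleton)
  ultimately show ?thesis by simp
qed

lemma power_CARD: "(x::'a::{field,finite}) ^ CARD('a) = x"
proof (cases "x = 0")
  case False
  have "x ^ CARD('a) = x * x ^ (CARD('a) - 1)"
    using CARD_finite_field_ge_2[where 'a='a] by (simp flip: power_Suc)
  thus ?thesis
    using power_CARD_minus_1[OF False] by simp
qed (use CARD_finite_field_ge_2[where 'a='a] in simp)

section \<open>The absolute trace and the additive character\<close>

lemma abs_trace_add: "abs_trace (x + y) = abs_trace x + abs_trace (y::'a::{field,finite})"
  unfolding abs_trace_def by (simp add: freshmans_dream'[OF prime_CHAR_finite_field] sum.distrib)

lemma abs_trace_power_CHAR: "abs_trace (x::'a::{field,finite}) ^ CHAR('a) = abs_trace x"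
proof -
  let ?p = "CHAR('a)" and ?n = "ff_deg TYPE('a)"
  have "abs_trace x ^ ?p = (\<Sum>j<?n. (x ^ (?p ^ j)) ^ ?p)"
    unfolding abs_trace_def by (rule freshmans_dream_sum) (simp_all add: prime_CHAR_finite_field)
  also have "\<dots> = (\<Sum>j<?n. x ^ (?p ^ Suc j))"
    by (simp add: power_mult[symmetric] mult.commute)
  also have "\<dots> = (\<Sum>j<Suc ?n. x ^ (?p ^ j)) - x ^ (?p ^ 0)"
    by (subst sum.lessThan_Suc_shift) simp
  also have "\<dots> = (\<Sum>j<?n. x ^ (?p ^ j)) + x ^ (?p ^ ?n) - x"
    by simp
  also have "x ^ (?p ^ ?n) = x"
    by (simp add: CHAR_power_ff_deg power_CARD)
  finally show ?thesis
    unfolding abs_trace_def by simp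
qed

lemma in_range_of_nat_if_power_CHAR_eq:
  assumes "(y::'a::{field,finite}) ^ CHAR('a) = y"
  shows "y \<in> range of_nat"
proof -
  let ?p = "CHAR('a)"
  have p: "?p \<ge> 2"
    using prime_ge_2_nat[OF prime_CHAR_finite_field] .
  define P :: "'a poly" where "P = monom 1 ?p - monom 1 1"
  have "coeff P ?p = 1"
    using p by (simp add: P_def coeff_monom)
  hence "P \<noteq> 0" by auto
  moreover have "degree P \<le> ?p"
    unfolding P_def using p by (intro degree_diff_le) (auto intro: order.trans[OF degree_monom_le])
  ultimately have card_roots: "card {z. poly P z = 0} \<le> ?p"
    using card_poly_roots_bound by (metis le_trans)
  let ?S = "of_nat ` {..<?p} :: 'a set"
  have S_roots: "?S \<subseteq> {z. poly P z = 0}"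
    by (auto simp: P_def poly_monom of_nat_power_CHAR)
  have "card ?S = ?p"
    by (subst card_image) (auto intro!: inj_onI simp: of_nat_eq_iff_cong_CHAR cong_def)
  moreover have "card ?S \<le> card {z. poly P z = 0}"
    using S_roots by (intro card_mono) auto
  ultimately have "?S = {z. poly P z = 0}"
    using S_roots card_roots by (intro card_subset_eq) auto
  moreover have "poly P y = 0"
    using assms by (simp add: P_def poly_monom)
  ultimately show ?thesis by auto
qed

lemma of_nat_trace_nat: "of_nat (trace_nat x) = abs_trace (x::'a::{field,finite})"
  using in_range_of_nat_if_power_CHAR_eq[OF abs_trace_power_CHAR, of x]
  unfolding trace_nat_def by (metis (mono_tags) LeastI rangeE)

text \<open>The trace is a polynomial function of degree \<open>p^(n-1) < q\<close>, so it cannot vanish on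
  all of \<open>K\<close>.\<close>

lemma abs_trace_nonzero: "\<exists>x::'a::{field,finite}. abs_trace x \<noteq> 0"
proof -
  let ?p = "CHAR('a)" and ?n = "ff_deg TYPE('a)"
  have p: "?p \<ge> 2"
    using prime_ge_2_nat[OF prime_CHAR_finite_field] .
  have n: "?n > 0"
    by (rule ff_deg_pos)
  define T :: "'a poly" where "T = (\<Sum>j<?n. monom 1 (?p ^ j))"
  have "coeff T (?p ^ (?n - 1)) = (\<Sum>j<?n. if ?p ^ j = ?p ^ (?n - 1) then 1 else 0)"
    by (simp add: T_def coeff_sum coeff_monom)
  also have "\<dots> = (\<Sum>j\<in>{?n - 1}. 1)"
    using p n by (intro sum.mono_neutral_cong_right) (auto simp: power_inject_exp)
  finally have "T \<noteq> 0"
    by auto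
  have "degree T \<le> ?p ^ (?n - 1)"
    unfolding T_def using p
    by (intro degree_sum_le) (auto intro!: order.trans[OF degree_monom_le] power_increasing)
  hence "card {x. poly T x = 0} \<le> ?p ^ (?n - 1)"
    using card_poly_roots_bound[OF \<open>T \<noteq> 0\<close>] by linarith
  also have "\<dots> < ?p ^ ?n"
    using p n by (intro power_strict_increasing) auto
  finally have "{x. poly T x = 0} \<noteq> UNIV"
    using CHAR_power_ff_deg[where 'a='a] by auto
  then obtain x where "poly T x \<noteq> 0"
    by auto
  moreover have "poly T x = abs_trace x"
    by (simp add: T_def abs_trace_def poly_sum poly_monom)
  ultimately show ?thesis by auto
qed

lemma psi_eq_exp:
  assumes "of_nat m = abs_trace (x::'a::{field,finite})"
  shows "psi x = exp (2 * pi * \<i> * of_nat m / of_nat CHAR('a))"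
proof -
  have "[trace_nat x = m] (mod CHAR('a))"
    using assms by (simp flip: of_nat_eq_iff_cong_CHAR add: of_nat_trace_nat)
  thus ?thesis
    unfolding psi_def cong_def
    using complex_root_unity_eq[of "CHAR('a)" "trace_nat x" m]
      prime_ge_1_nat[OF prime_CHAR_finite_field[where 'a='a]]
    by simp
qed

lemma psi_add: "psi (x + y) = psi x * psi (y::'a::{field,finite})"
proof -
  have "of_nat (trace_nat x + trace_nat y) = abs_trace (x + y)"
    by (simp add: of_nat_trace_nat abs_trace_add)
  hence "psi (x + y) = exp (2 * pi * \<i> * of_nat (trace_nat x + trace_nat y) / of_nat CHAR('a))"
    by (rule psi_eq_exp)
  thus ?thesis
    by (simp add: psi_def add_divide_distrib distrib_left exp_add)
qed

lemma psi_0: "psi (0::'a::{field,finite}) = 1"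
proof -
  have "abs_trace (0::'a) = of_nat 0"
    using prime_gt_0_nat[OF prime_CHAR_finite_field[where 'a='a]]
    by (simp add: abs_trace_def power_0_left)
  thus ?thesis
    using psi_eq_exp[of 0 "0::'a"] by simp
qed

lemma psi_sum: "psi (\<Sum>i\<in>I. f i) = (\<Prod>i\<in>I. psi (f i :: 'a::{field,finite}))"
  by (induction I rule: infinite_finite_induct) (simp_all add: psi_0 psi_add)

lemma psi_nontrivial: "\<exists>x::'a::{field,finite}. psi x \<noteq> 1"
proof -
  obtain x :: 'a where x: "abs_trace x \<noteq> 0"
    using abs_trace_nonzero by blast
  have "psi x \<noteq> 1"
  proof
    assume "psi x = 1"
    hence "CHAR('a) dvd trace_nat x"
      unfolding psi_def
      using complex_root_unity_eq_1 prime_ge_1_nat[OF prime_CHAR_finite_field[where 'a='a]]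
      by simp
    hence "abs_trace x = 0"
      by (simp flip: of_nat_trace_nat add: of_nat_eq_0_iff_char_dvd)
    with x show False ..
  qed
  thus ?thesis ..
qed

lemma sum_psi: "(\<Sum>x\<in>UNIV. psi (x::'a::{field,finite})) = 0"
proof -
  obtain c :: 'a where c: "psi c \<noteq> 1"
    using psi_nontrivial by blast
  have "(\<Sum>x\<in>UNIV. psi (x::'a)) = (\<Sum>x\<in>UNIV. psi (x + c))"
    by (rule sum.reindex_bij_witness[of _ "\<lambda>y. y + c" "\<lambda>y. y - c"]) auto
  also have "\<dots> = psi c * (\<Sum>x\<in>UNIV. psi (x::'a))"
    by (simp add: psi_add sum_distrib_left mult.commute)
  finally show ?thesis
    using c by (metis mult_cancel_right1)
qed

lemma sum_psi_mult:
  "(\<Sum>x\<in>UNIV. psi (c * x)) = (if c = 0 then of_nat CARD('a) else (0::complex))"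
  for c :: "'a::{field,finite}"
proof (cases "c = 0")
  case False
  have "(\<Sum>x\<in>UNIV. psi (c * x)) = (\<Sum>x\<in>UNIV. psi (x::'a))"
    by (rule sum.reindex_bij_witness[of _ "\<lambda>y. y / c" "\<lambda>y. c * y"]) (use False in auto)
  thus ?thesis
    using False sum_psi by simp
qed (simp add: psi_0)

section \<open>The power map and the sums \<open>W\<^sub>u\<close>\<close>

lemma power_Suc_mult_CARD_minus_1: "(x::'a::{field,finite}) ^ Suc (c * (CARD('a) - 1)) = x"
proof (cases "x = 0")
  case False
  have "x ^ (c * (CARD('a) - 1)) = (x ^ (CARD('a) - 1)) ^ c"
    by (metis power_mult mult.commute)
  thus ?thesis
    using power_CARD_minus_1[OF False] by simp
qed simp

lemma inv_exp_spec:
  assumes "coprime s (CARD('a::{field,finite}) - 1)"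
  shows "inv_exp TYPE('a) s > 0" and "[s * inv_exp TYPE('a) s = 1] (mod (CARD('a) - 1))"
proof -
  obtain x where x: "[s * x = 1] (mod (CARD('a) - 1))"
    using cong_solve_coprime_nat[OF assms] by auto
  have "[s * x + s * (CARD('a) - 1) = 1 + 0] (mod (CARD('a) - 1))"
    by (rule cong_add[OF x]) (simp add: cong_def)
  hence "[s * (x + (CARD('a) - 1)) = 1] (mod (CARD('a) - 1))"
    by (simp only: distrib_left add_0_right)
  moreover have "x + (CARD('a) - 1) > 0"
    using CARD_finite_field_ge_2[where 'a='a] by simp
  ultimately have "\<exists>e. e > 0 \<and> [s * e = 1] (mod (CARD('a) - 1))"
    by blast
  from someI_ex[OF this]
  show "inv_exp TYPE('a) s > 0" "[s * inv_exp TYPE('a) s = 1] (mod (CARD('a) - 1))"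
    unfolding inv_exp_def by auto
qed

lemma power_inv_exp:
  assumes "s > 0" "coprime s (CARD('a::{field,finite}) - 1)"
  shows "((x::'a) ^ s) ^ inv_exp TYPE('a) s = x" and "(x ^ inv_exp TYPE('a) s) ^ s = x"
proof -
  let ?e = "inv_exp TYPE('a) s"
  have "1 \<le> s * ?e"
    using assms inv_exp_spec(1)[OF assms(2)] by simp
  then obtain c where "s * ?e = c * (CARD('a) - 1) + 1"
    using inv_exp_spec(2)[OF assms(2)] cong_le_nat by blast
  hence "x ^ (s * ?e) = x"
    using power_Suc_mult_CARD_minus_1 by simp
  thus "(x ^ s) ^ ?e = x" "(x ^ ?e) ^ s = x"
    by (simp_all add: mult.commute flip: power_mult)
qed

lemma sum_power_reindex:
  assumes "s > 0" "coprime s (CARD('a::{field,finite}) - 1)"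
  shows "(\<Sum>x\<in>UNIV. f (x ^ s)) = (\<Sum>x\<in>UNIV. f (x::'a))"
  by (rule sum.reindex_bij_witness[of _ "\<lambda>y. y ^ inv_exp TYPE('a) s" "\<lambda>y. y ^ s"])
     (simp_all add: power_inv_exp[OF assms])

lemma W_0:
  assumes "s > 0" "coprime s (CARD('a::{field,finite}) - 1)"
  shows "W s (0::'a) = 0"
  unfolding W_def using sum_power_reindex[OF assms, of psi] sum_psi by simp

lemma sum_W_nonzero:
  assumes "s > 0" "coprime s (CARD('a::{field,finite}) - 1)"
  shows "(\<Sum>a\<in>{a::'a. a \<noteq> 0}. W s a) = of_nat CARD('a)"
proof -
  have "(\<Sum>a\<in>{a::'a. a \<noteq> 0}. W s a) = (\<Sum>a\<in>UNIV. W s (a::'a))"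
    by (rule sum.mono_neutral_left) (simp_all add: W_0[OF assms])
  also have "\<dots> = (\<Sum>a\<in>UNIV. \<Sum>x\<in>UNIV. psi (x ^ s) * psi (- x * (a::'a)))"
    unfolding W_def by (simp add: algebra_simps flip: psi_add)
  also have "\<dots> = (\<Sum>x\<in>UNIV. psi (x ^ s) * (\<Sum>a\<in>UNIV. psi (- x * (a::'a))))"
    by (subst sum.swap) (simp add: sum_distrib_left)
  also have "\<dots> = (\<Sum>x\<in>UNIV. if x = (0::'a) then of_nat CARD('a) else 0)"
  proof (intro sum.cong refl)
    fix x :: 'a
    have "(\<Sum>a\<in>UNIV. psi (- (x * a))) = (if x = 0 then of_nat CARD('a) else 0)"
      using sum_psi_mult[of "- x"] by simp
    thus "psi (x ^ s) * (\<Sum>a\<in>UNIV. psi (- x * a)) = (if x = 0 then of_nat CARD('a) else 0)"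
      using assms(1) by (simp add: psi_0 zero_power)
  qed
  also have "\<dots> = of_nat CARD('a)"
    by simp
  finally show ?thesis .
qed

lemma sum_nonzero_psi_power_minus_linear:
  fixes b u :: "'a::{field,finite}"
  assumes "s > 0" "coprime s (CARD('a) - 1)" "u \<noteq> 0"
  defines "r \<equiv> b ^ inv_exp TYPE('a) s"
  shows "(\<Sum>y\<in>{y::'a. y \<noteq> 0}. psi (y ^ s * b - u * y) - psi (y ^ s * b))
    = (if r = 0 then - of_nat CARD('a) else W s (u / r))"
proof -
  have r: "r ^ s = b" and r0: "r = 0 \<longleftrightarrow> b = 0"
    using power_inv_exp[OF assms(1,2)] assms(1) unfolding r_def by (metis power_0_left not_gr0)+
  have "(\<Sum>y\<in>{y::'a. y \<noteq> 0}. psi (y ^ s * b - u * y) - psi (y ^ s * b))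
      = (\<Sum>y\<in>UNIV. psi (y ^ s * b - u * y)) - (\<Sum>y\<in>UNIV. psi (b * y ^ s))"
    using assms(1) by (subst sum.mono_neutral_left) (simp_all add: sum_subtractf mult.commute)
  also have "(\<Sum>y\<in>UNIV. psi (b * y ^ s)) = (if b = 0 then of_nat CARD('a) else 0)"
    using sum_power_reindex[OF assms(1,2), of "\<lambda>z. psi (b * z)"] by (simp add: sum_psi_mult)
  also have "(\<Sum>y\<in>UNIV. psi (y ^ s * b - u * y)) = (if b = 0 then 0 else W s (u / r))"
  proof (cases "b = 0")
    case True
    thus ?thesis
      using sum_psi_mult[of "- u"] assms(1,3) by simp
  next
    case False
    hence "r \<noteq> 0" using r0 by simp
    have "W s (u / r) = (\<Sum>y\<in>UNIV. psi ((r * y) ^ s - u / r * (r * y)))"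
      unfolding W_def
      by (rule sum.reindex_bij_witness[of _ "\<lambda>y. r * y" "\<lambda>y. y / r"]) (use \<open>r \<noteq> 0\<close> in auto)
    also have "\<dots> = (\<Sum>y\<in>UNIV. psi (y ^ s * b - u * y))"
      using \<open>r \<noteq> 0\<close> by (simp add: power_mult_distrib r mult.commute)
    finally show ?thesis
      using False by simp
  qed
  finally show ?thesis
    using r0 by simp
qed

lemma sum_W_indicator:
  assumes "s > 0" "coprime s (CARD('a::{field,finite}) - 1)" "u \<noteq> 0"
  shows "(\<Sum>a\<in>{a::'a. a \<noteq> 0}. W s a * ((if r = u / a then 1 else 0) - (if r = 0 then 1 else 0)))
    = (if r = 0 then - of_nat CARD('a) else W s (u / r))"
proof (cases "r = 0")
  case True
  have "(\<Sum>a\<in>{a::'a. a \<noteq> 0}. W s a * ((if r = u / a then 1 else 0) - (if r = 0 then 1 else 0)))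
      = - (\<Sum>a\<in>{a::'a. a \<noteq> 0}. W s a)"
    using True assms(3) by (simp add: sum_negf)
  thus ?thesis
    using True sum_W_nonzero[OF assms(1,2)] by simp
next
  case False
  have "(\<Sum>a\<in>{a::'a. a \<noteq> 0}. W s a * ((if r = u / a then 1 else 0) - (if r = 0 then 1 else 0)))
      = (\<Sum>a\<in>{a::'a. a \<noteq> 0}. if a = u / r then W s a else 0)"
    using False assms(3) by (intro sum.cong) (auto simp: field_simps)
  thus ?thesis
    using False assms(3) by simp
qed

section \<open>Sums over vectors\<close>

definition lin_form :: "nat \<Rightarrow> (nat \<Rightarrow> 'a) \<Rightarrow> (nat \<Rightarrow> 'a) \<Rightarrow> 'a::comm_semiring_1" where
  "lin_form k t v = (\<Sum>i<k. t i * v i)"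

definition power_sum :: "nat \<Rightarrow> nat \<Rightarrow> (nat \<Rightarrow> 'a) \<Rightarrow> 'a::comm_semiring_1" where
  "power_sum s k v = (\<Sum>i<k. v i ^ s)"

lemma lin_form_scale: "lin_form k t (\<lambda>i\<in>{..<k}. y * v i) = y * lin_form k t v"
  unfolding lin_form_def by (simp add: sum_distrib_left mult_ac)

lemma power_sum_scale: "power_sum s k (\<lambda>i\<in>{..<k}. y * v i) = y ^ s * power_sum s k v"
  unfolding power_sum_def by (simp add: sum_distrib_left power_mult_distrib)

lemma sum_lin_form_nonzero_by_scaling:
  fixes t :: "nat \<Rightarrow> 'a::field"
  shows "(\<Sum>w\<in>{w \<in> {..<k} \<rightarrow>\<^sub>E UNIV. lin_form k t w \<noteq> 0}. f w)
    = (\<Sum>v\<in>{v \<in> {..<k} \<rightarrow>\<^sub>E UNIV. lin_form k t v = 1}. \<Sum>y\<in>{y. y \<noteq> 0}. f (\<lambda>i\<in>{..<k}. y * v i))"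
proof -
  have "(\<Sum>v\<in>{v \<in> {..<k} \<rightarrow>\<^sub>E UNIV. lin_form k t v = 1}. \<Sum>y\<in>{y. y \<noteq> 0}. f (\<lambda>i\<in>{..<k}. y * v i))
      = (\<Sum>(v, y)\<in>{v \<in> {..<k} \<rightarrow>\<^sub>E UNIV. lin_form k t v = 1} \<times> {y. y \<noteq> 0}. f (\<lambda>i\<in>{..<k}. y * v i))"
    by (rule sum.cartesian_product)
  also have "\<dots> = (\<Sum>w\<in>{w \<in> {..<k} \<rightarrow>\<^sub>E UNIV. lin_form k t w \<noteq> 0}. f w)"
    by (rule sum.reindex_bij_witness[of _
          "\<lambda>w. ((\<lambda>i\<in>{..<k}. inverse (lin_form k t w) * w i), lin_form k t w)"
          "\<lambda>(v, y). \<lambda>i\<in>{..<k}. y * v i"])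
       (auto simp: lin_form_scale fun_eq_iff PiE_def extensional_def)
  finally show ?thesis ..
qed

lemma Wt_coef_eq_sum_vectors:
  "Wt_coef s k t u = (\<Sum>v\<in>{..<k} \<rightarrow>\<^sub>E UNIV. psi (power_sum s k v - u * lin_form k t v))"
proof -
  have "Wt_coef s k t u = (\<Prod>i<k. \<Sum>x\<in>UNIV. psi (x ^ s - t i * u * x))"
    by (simp add: Wt_coef_def W_def mult.assoc)
  also have "\<dots> = (\<Sum>v\<in>{..<k} \<rightarrow>\<^sub>E UNIV. \<Prod>i<k. psi (v i ^ s - t i * u * v i))"
    by (rule prod_sum_PiE) auto
  also have "\<dots> = (\<Sum>v\<in>{..<k} \<rightarrow>\<^sub>E UNIV. psi (\<Sum>i<k. v i ^ s - t i * u * v i))"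
    by (simp add: psi_sum)
  also have "\<dots> = (\<Sum>v\<in>{..<k} \<rightarrow>\<^sub>E UNIV. psi (power_sum s k v - u * lin_form k t v))"
    by (simp add: power_sum_def lin_form_def sum_subtractf sum_distrib_left mult_ac)
  finally show ?thesis .
qed

lemma sum_psi_power_sum:
  assumes "k > 0" "s > 0" "coprime s (CARD('a::{field,finite}) - 1)"
  shows "(\<Sum>v\<in>{..<k} \<rightarrow>\<^sub>E (UNIV :: 'a set). psi (power_sum s k v)) = 0"
proof -
  have "(\<Prod>i<k. \<Sum>x\<in>UNIV. psi ((x::'a) ^ s)) = (\<Sum>v\<in>{..<k} \<rightarrow>\<^sub>E (UNIV :: 'a set). \<Prod>i<k. psi (v i ^ s))"
    by (rule prod_sum_PiE) auto
  hence "(\<Sum>v\<in>{..<k} \<rightarrow>\<^sub>E (UNIV :: 'a set). psi (power_sum s k v))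
      = (\<Prod>i<k. \<Sum>x\<in>UNIV. psi ((x::'a) ^ s))"
    by (simp add: power_sum_def psi_sum)
  also have "(\<Sum>x\<in>UNIV. psi ((x::'a) ^ s)) = 0"
    using sum_power_reindex[OF assms(2,3), of psi] sum_psi by simp
  finally show ?thesis
    using assms(1) by simp
qed

lemma Wt_coef_eq_sum_scaled:
  fixes t :: "nat \<Rightarrow> 'a::{field,finite}"
  assumes "k > 0" "s > 0" "coprime s (CARD('a) - 1)"
  shows "Wt_coef s k t u = (\<Sum>v\<in>{v \<in> {..<k} \<rightarrow>\<^sub>E UNIV. lin_form k t v = 1}. \<Sum>y\<in>{y. y \<noteq> 0}.
    psi (y ^ s * power_sum s k v - u * y) - psi (y ^ s * power_sum s k v))"
proof -
  let ?g = "\<lambda>w. psi (power_sum s k w - u * lin_form k t w) - psi (power_sum s k w)"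
  have "Wt_coef s k t u = (\<Sum>w\<in>{..<k} \<rightarrow>\<^sub>E UNIV. ?g w)"
    by (simp add: Wt_coef_eq_sum_vectors sum_subtractf sum_psi_power_sum[OF assms])
  also have "\<dots> = (\<Sum>w\<in>{w \<in> {..<k} \<rightarrow>\<^sub>E UNIV. lin_form k t w \<noteq> 0}. ?g w)"
    by (rule sum.mono_neutral_right) (auto intro!: finite_PiE)
  also have "\<dots> = (\<Sum>v\<in>{v \<in> {..<k} \<rightarrow>\<^sub>E UNIV. lin_form k t v = 1}. \<Sum>y\<in>{y. y \<noteq> 0}.
      psi (y ^ s * power_sum s k v - u * y) - psi (y ^ s * power_sum s k v))"
    by (simp add: sum_lin_form_nonzero_by_scaling lin_form_scale power_sum_scale)
  finally show ?thesis .
qed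

lemma Vt_coef_eq_sum:
  "Vt_coef s k t b = (\<Sum>v\<in>{v \<in> {..<k} \<rightarrow>\<^sub>E UNIV. lin_form k t v = 1}.
     (if power_sum s k v ^ inv_exp TYPE('a) s = b then 1 else 0)
     - (if power_sum s k v ^ inv_exp TYPE('a) s = 0 then 1 else 0))"
  for t :: "nat \<Rightarrow> 'a::{field,finite}"
proof -
  let ?V = "{v \<in> {..<k} \<rightarrow>\<^sub>E UNIV. lin_form k t v = 1}"
  have Q: "of_nat (Q s k t 1 c)
      = (\<Sum>v\<in>?V. if power_sum s k v ^ inv_exp TYPE('a) s = c then 1 else 0 :: complex)" for c
  proof -
    have "finite ?V"
      using finite_PiE[of "{..<k}" "\<lambda>_. UNIV :: 'a set"] by simp
    have "Q s k t 1 c = card {v \<in> ?V. power_sum s k v ^ inv_exp TYPE('a) s = c}"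
      unfolding Q_def lin_form_def power_sum_def by (rule arg_cong[where f = card]) auto
    also have "of_nat \<dots> = (\<Sum>v\<in>{v \<in> ?V. power_sum s k v ^ inv_exp TYPE('a) s = c}. 1 :: complex)"
      by simp
    finally show ?thesis
      by (simp only: sum.inter_filter[OF \<open>finite ?V\<close>])
  qed
  show ?thesis
    by (simp add: Vt_coef_def Q sum_subtractf)
qed

lemma ga_mult_eq_sum:
  assumes "(u::'a::{field,finite}) \<noteq> 0"
  shows "ga_mult S T u = (\<Sum>a\<in>{a. a \<noteq> 0}. S a * T (u / a))"
  unfolding ga_mult_def
proof (intro sum.cong refl)
  fix a :: 'a
  assume "a \<in> {a. a \<noteq> 0}"
  hence "(\<Sum>b\<in>{b. b \<noteq> 0}. if a * b = u then S a * T b else 0)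
      = (\<Sum>b\<in>{b. b \<noteq> 0}. if b = u / a then S a * T b else 0)"
    by (intro sum.cong refl) (auto simp: field_simps)
  also have "\<dots> = S a * T (u / a)"
    using assms \<open>a \<in> {a. a \<noteq> 0}\<close> by simp
  finally show "(\<Sum>b\<in>{b. b \<noteq> 0}. if a * b = u then S a * T b else 0) = S a * T (u / a)" .
qed

theorem proposition5p13:
  fixes t :: "nat \<Rightarrow> 'a::{field,finite}" and p q s k :: nat
  assumes "CHAR('a) = p" and "CARD('a) = q"
    and "s > 0" and "coprime s (q - 1)"
    and "k > 0" and "\<forall>i<k. t i \<noteq> 0"
  shows "\<forall>u::'a. u \<noteq> 0 \<longrightarrow> Wt_coef s k t u = ga_mult (Wcoef s) (Vt_coef s k t) u"
proof (intro allI impI)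
  fix u :: 'a
  assume u: "u \<noteq> 0"
  have s: "s > 0" "coprime s (CARD('a) - 1)"
    using assms(2-4) by simp_all
  let ?V = "{v \<in> {..<k} \<rightarrow>\<^sub>E UNIV. lin_form k t v = 1}"
  let ?r = "\<lambda>v. power_sum s k v ^ inv_exp TYPE('a) s"
  let ?\<delta> = "\<lambda>v a. (if ?r v = u / a then 1 else 0) - (if ?r v = 0 then 1 else 0) :: complex"
  have "Wt_coef s k t u = (\<Sum>v\<in>?V. if ?r v = 0 then - of_nat CARD('a) else W s (u / ?r v))"
    by (simp add: Wt_coef_eq_sum_scaled[OF assms(5) s] sum_nonzero_psi_power_minus_linear[OF s u])
  also have "\<dots> = (\<Sum>v\<in>?V. \<Sum>a\<in>{a. a \<noteq> 0}. W s a * ?\<delta> v a)"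
    by (simp only: sum_W_indicator[OF s u])
  also have "\<dots> = (\<Sum>a\<in>{a. a \<noteq> 0}. W s a * (\<Sum>v\<in>?V. ?\<delta> v a))"
    by (subst sum.swap) (simp add: sum_distrib_left)
  also have "\<dots> = ga_mult (Wcoef s) (Vt_coef s k t) u"
    by (simp add: ga_mult_eq_sum[OF u] Wcoef_def Vt_coef_eq_sum)
  finally show "Wt_coef s k t u = ga_mult (Wcoef s) (Vt_coef s k t) u" .
qed

end
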